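(* Let $U$ be a nonempty finite set, $R$ a relation on $U$, $M(R)$ the relation matroid induced by $R$, and $R(M(R))$ the relation induced by $M(R)$. Then $R(M(R))=R$ if and only if $R$ is an equivalence relation.
   Context: For $x\in U$, $RS_R(x)=\{y\in U:(x,y)\in R\}$. $\mathbf{I}(R)=\{X\subseteq U: \forall x,y\in X,\ x\neq y \Rightarrow RS_R(x)\neq RS_R(y)\}$; this is the family of independent sets of a matroid $M(R)=(U,\mathbf{I}(R))$, called the relation matroid induced by $R$. For a matroid $M$ on $U$ with family of circuits (minimal dependent sets) $\mathbf{C}(M)$, the relation induced by $M$ is $R(M)$ given by $x\,R(M)\,y \iff x=y$ or $\{x,y\}\in\mathbf{C}(M)$. *)

theory Defs
  imports Main
begin

definition RS :: "'a set \<Rightarrow> 'a rel \<Rightarrow> 'a \<Rightarrow> 'a set" where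
  "RS U R x = {y \<in> U. (x, y) \<in> R}"

definition rel_indep :: "'a set \<Rightarrow> 'a rel \<Rightarrow> 'a set set" where
  "rel_indep U R = {X. X \<subseteq> U \<and> (\<forall>x\<in>X. \<forall>y\<in>X. x \<noteq> y \<longrightarrow> RS U R x \<noteq> RS U R y)}"

text \<open>A matroid on U is represented by its family of independent sets.
  Circuits: minimal dependent subsets of U.\<close>
definition circuits :: "'a set \<Rightarrow> 'a set set \<Rightarrow> 'a set set" where
  "circuits U I = {C. C \<subseteq> U \<and> C \<notin> I \<and> (\<forall>D. D \<subset> C \<longrightarrow> D \<in> I)}"

definition matroid_rel :: "'a set \<Rightarrow> 'a set set \<Rightarrow> 'a rel" where
  "matroid_rel U I = {(x, y). x \<in> U \<and> y \<in> U \<and> (x = y \<or> {x, y} \<in> circuits U I)}"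

end

theory Submission
  imports Defs
begin

(* A two-element set {x, y} is a circuit of the relation matroid
   M(R) exactly when x and y have the same successor neighbourhood: it is
   dependent iff RS(x) = RS(y), and its proper subsets (at most singletons)
   are always independent.  Hence R(M(R)) is the relation "x and y have the
   same successor neighbourhood" on U, which is the kernel of the map RS and
   therefore always an equivalence relation on U.  So R(M(R)) = R forces R
   to be an equivalence.  Conversely, for an equivalence R the neighbourhood
   RS(x) is the class of x, and two classes coincide iff their representatives
   are related, so the kernel of RS is R itself. *)

definition same_nbhd :: "'a set \<Rightarrow> 'a rel \<Rightarrow> 'a rel" where
  "same_nbhd U R = {(x, y). x \<in> U \<and> y \<in> U \<and> RS U R x = RS U R y}"

lemma subsingleton_rel_indep:
  assumes "D \<subseteq> U" and "\<forall>x\<in>D. \<forall>y\<in>D. x = y"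
  shows "D \<in> rel_indep U R"
  using assms unfolding rel_indep_def by blast

lemma pair_circuit_iff_same_RS:
  assumes "x \<in> U" and "y \<in> U" and "x \<noteq> y"
  shows "{x, y} \<in> circuits U (rel_indep U R) \<longleftrightarrow> RS U R x = RS U R y"
proof -
  have dependent: "{x, y} \<notin> rel_indep U R \<longleftrightarrow> RS U R x = RS U R y"
    using assms unfolding rel_indep_def by auto
  have "D \<in> rel_indep U R" if "D \<subset> {x, y}" for D
    using that assms by (intro subsingleton_rel_indep) auto
  then show ?thesis
    using dependent assms unfolding circuits_def by auto
qed

lemma matroid_rel_rel_indep:
  "matroid_rel U (rel_indep U R) = same_nbhd U R"
  unfolding matroid_rel_def same_nbhd_def using pair_circuit_iff_same_RS by fastforce

text \<open>Being the kernel of a function on U, the same-neighbourhood relation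
  is always an equivalence on U.\<close>
lemma equiv_same_nbhd: "equiv U (same_nbhd U R)"
  unfolding same_nbhd_def equiv_def refl_on_def sym_def trans_def by auto

text \<open>For an equivalence relation the neighbourhood of x is its class, and
  classes coincide exactly for related elements.\<close>
lemma same_nbhd_of_equiv:
  assumes "equiv U R"
  shows "same_nbhd U R = R"
proof -
  have RS_class: "RS U R x = R `` {x}" for x
    using equiv_type[OF assms] unfolding RS_def by auto
  have "(x, y) \<in> same_nbhd U R \<longleftrightarrow> (x, y) \<in> R" for x y
  proof -
    have "(x, y) \<in> R \<Longrightarrow> x \<in> U \<and> y \<in> U"
      using equiv_type[OF assms] by auto
    moreover have "x \<in> U \<Longrightarrow> y \<in> U \<Longrightarrow> R `` {x} = R `` {y} \<longleftrightarrow> (x, y) \<in> R"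
      using eq_equiv_class_iff[OF assms] by blast
    ultimately show ?thesis
      unfolding same_nbhd_def RS_class by auto
  qed
  then show ?thesis by auto
qed

theorem mainTheorem17:
  fixes U :: "'a set" and R :: "'a rel"
  assumes "finite U" and "U \<noteq> {}" and "R \<subseteq> U \<times> U"
  shows "matroid_rel U (rel_indep U R) = R \<longleftrightarrow> equiv U R"
proof
  assume "matroid_rel U (rel_indep U R) = R"
  then have "same_nbhd U R = R" by (simp add: matroid_rel_rel_indep)
  then show "equiv U R" using equiv_same_nbhd by metis
next
  assume "equiv U R"
  then show "matroid_rel U (rel_indep U R) = R"
    by (simp add: matroid_rel_rel_indep same_nbhd_of_equiv)
qed

end
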